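(* Let $P$ be (the normalised CFMDP of) a program over label set $\Sigma$, let $\Phi=(\varphi_e,\varphi_f)$ be a specification and let $\beta\in[0,1]$. If $\mathbb{P}_\Phi(P)\le\beta$, then there exist PCFAs $Q$ and $A$ over $\Sigma$ satisfying the following three conditions: (i) $\mathcal{L}(P)\subseteq\mathcal{L}(Q)\cup\mathcal{L}(A)$; (ii) for every $\tau\in\mathcal{L}(Q)$ and every $s\models\varphi_e$, $[\![\tau]\!](s)\not\models\neg\varphi_f$; (iii) $\mathbb{P}^{\mathcal{L}}_\Phi(\mathcal{L}(A))\le\beta$.
   Context: Labels. $\Sigma$ is a finite label set. It contains probabilistic labels $\mathrm{Pb}_{(i,\mathtt{L})}$ and $\mathrm{Pb}_{(i,\mathtt{R})}$, indexed by identifiers $i$ of fair binary probabilistic choices. The other labels are non-random (set $\Sigma^-$). PCFA. A PCFA is a tuple $(L,\Sigma,\delta,\ell_0,\ell_e)$ with $L$ finite, $\delta\subseteq L\times\Sigma\times L$ and unique accepting location $\ell_e$. Its language $\mathcal{L}$ is the set of finite words labelling paths from $\ell_0$ to $\ell_e$. CFMDP and CFMC. A CFMDP is a deterministic PCFA with no transitions out of $\ell_e$. The action of a transition labelled $\sigma\in\Sigma^-$ is $\sigma$, and that of a transition labelled $\mathrm{Pb}_{(i,d)}$ is $i$. A CFMC is a CFMDP in which all transitions out of each location share one action. A CFMDP is normalised if, whenever $\ell\xrightarrow{\mathrm{Pb}_{(i,\mathtt{L})}}\ell_1$ and $\ell\xrightarrow{\mathrm{Pb}_{(i,\mathtt{R})}}\ell_2$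 both exist, $\ell_1\neq\ell_2$. Strategies. $\mathcal{S}(\mathcal{A})$ is the set of finite-memory strategies for $\mathcal{A}$, and $\mathcal{A}^\psi$ is the induced CFMC. Semantics and weight. Labels are interpreted as functions $[\![\sigma]\!]$ on program states, with probabilistic and non-deterministic labels interpreted as the identity. $[\![\sigma_1\cdots\sigma_n]\!]=[\![\sigma_n]\!]\circ\cdots\circ[\![\sigma_1]\!]$. $wt(\tau)=2^{-n}$, where $n$ is the number of probabilistic labels in $\tau$. Violation probabilities. $$\mathbb{P}_\Phi(\mathcal{A})=\sup_{s\models\varphi_e}\sup_{\psi\in\mathcal{S}(\mathcal{A})}\sum_{\tau\in\mathcal{L}(\mathcal{A}^\psi)}wt(\tau)\,[\,[\![\tau]\!](s)\models\neg\varphi_f\,].$$ $\Theta\subseteq\Sigma^*$ is mergeable if $\Theta=\mathcal{L}(\mathcal{M})$ for a CFMC $\mathcal{M}$, and $\mathrm{Mergeable}(\Theta)$ is the set of mergeable subsets of $\Theta$. Then $$\mathbb{P}^{\mathcal{L}}_\Phi(\Theta)=\sup_{s\models\varphi_e}\sup_{\Pi\in\mathrm{Mergeable}(\Theta)}\sum_{\tau\in\Pi}wt(\tau)\,[\,[\![\tau]\!](s)\models\neg\varphi_f\,].$$ *)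

theory Defs
  imports "HOL-Analysis.Analysis"
begin

datatype dir = Lft | Rgt

text \<open>Probabilistic labels Pb i d (fair binary choice i, branch d) and non-random labels Op a.\<close>
datatype ('i, 'a) lbl = Pb 'i dir | Op 'a

fun is_pb :: "('i, 'a) lbl \<Rightarrow> bool" where
  "is_pb (Pb i d) = True"
| "is_pb (Op a) = False"

fun action :: "('i, 'a) lbl \<Rightarrow> ('i, 'a) lbl + 'i" where
  "action (Pb i d) = Inr i"
| "action (Op a) = Inl (Op a)"

record ('q, 'l) pcfa =
  p_locs  :: "'q set"
  p_trans :: "('q \<times> 'l \<times> 'q) set"
  p_init  :: 'q
  p_final :: 'q

definition is_pcfa :: "'l set \<Rightarrow> ('q, 'l) pcfa \<Rightarrow> bool" where
  "is_pcfa Sig A \<longleftrightarrow> finite (p_locs A) \<and> p_trans A \<subseteq> p_locs A \<times> Sig \<times> p_locs A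
     \<and> p_init A \<in> p_locs A \<and> p_final A \<in> p_locs A"

fun reach :: "('q, 'l) pcfa \<Rightarrow> 'q \<Rightarrow> 'l list \<Rightarrow> 'q \<Rightarrow> bool" where
  "reach A q [] q' = (q = q')"
| "reach A q (s # w) q' = (\<exists>p. (q, s, p) \<in> p_trans A \<and> reach A p w q')"

definition lang :: "('q, 'l) pcfa \<Rightarrow> 'l list set" where
  "lang A = {w. reach A (p_init A) w (p_final A)}"

definition deterministic :: "('q, 'l) pcfa \<Rightarrow> bool" where
  "deterministic A \<longleftrightarrow> (\<forall>q s p p'. (q, s, p) \<in> p_trans A \<longrightarrow> (q, s, p') \<in> p_trans A \<longrightarrow> p = p')"

definition cfmdp :: "('i, 'a) lbl set \<Rightarrow> ('q, ('i, 'a) lbl) pcfa \<Rightarrow> bool" where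
  "cfmdp Sig A \<longleftrightarrow> is_pcfa Sig A \<and> deterministic A \<and> (\<forall>s p. (p_final A, s, p) \<notin> p_trans A)"

definition cfmc :: "('i, 'a) lbl set \<Rightarrow> ('q, ('i, 'a) lbl) pcfa \<Rightarrow> bool" where
  "cfmc Sig A \<longleftrightarrow> cfmdp Sig A \<and>
     (\<forall>q s p s' p'. (q, s, p) \<in> p_trans A \<longrightarrow> (q, s', p') \<in> p_trans A \<longrightarrow> action s = action s')"

definition normalised :: "('q, ('i, 'a) lbl) pcfa \<Rightarrow> bool" where
  "normalised A \<longleftrightarrow> (\<forall>q i p1 p2. (q, Pb i Lft, p1) \<in> p_trans A \<longrightarrow> (q, Pb i Rgt, p2) \<in> p_trans A \<longrightarrow> p1 \<noteq> p2)"

record ('q, 'i, 'a) fmstrat =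
  s_mem  :: "nat set"
  s_m0   :: nat
  s_upd  :: "nat \<Rightarrow> 'q \<Rightarrow> ('i, 'a) lbl \<Rightarrow> nat"
  s_ch   :: "'q \<Rightarrow> nat \<Rightarrow> ('i, 'a) lbl + 'i"

definition is_fmstrat :: "('q, ('i, 'a) lbl) pcfa \<Rightarrow> ('q, 'i, 'a) fmstrat \<Rightarrow> bool" where
  "is_fmstrat A S \<longleftrightarrow> finite (s_mem S) \<and> s_m0 S \<in> s_mem S \<and>
     (\<forall>m \<in> s_mem S. \<forall>q s p. (q, s, p) \<in> p_trans A \<longrightarrow> s_upd S m q s \<in> s_mem S)"

text \<open>Runs of the induced CFMC A^psi: product of A with the memory, keeping at (q,m) only
  the transitions whose action is the chosen one.\<close>
fun ind_reach :: "('q, ('i, 'a) lbl) pcfa \<Rightarrow> ('q, 'i, 'a) fmstrat \<Rightarrow> 'q \<Rightarrow> nat \<Rightarrow> ('i, 'a) lbl list \<Rightarrow> bool" where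
  "ind_reach A S q m [] = (q = p_final A)"
| "ind_reach A S q m (s # w) =
     (\<exists>p. (q, s, p) \<in> p_trans A \<and> action s = s_ch S q m \<and> ind_reach A S p (s_upd S m q s) w)"

definition induced_lang :: "('q, ('i, 'a) lbl) pcfa \<Rightarrow> ('q, 'i, 'a) fmstrat \<Rightarrow> ('i, 'a) lbl list set" where
  "induced_lang A S = {w. ind_reach A S (p_init A) (s_m0 S) w}"

definition sem :: "('a \<Rightarrow> 's \<Rightarrow> 's) \<Rightarrow> ('i, 'a) lbl list \<Rightarrow> 's \<Rightarrow> 's" where
  "sem I w s = fold (\<lambda>l t. case l of Pb i d \<Rightarrow> t | Op a \<Rightarrow> I a t) w s"

definition wt :: "('i, 'a) lbl list \<Rightarrow> ennreal" where
  "wt w = ennreal ((1/2) ^ length (filter is_pb w))"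

definition viol_mass :: "('a \<Rightarrow> 's \<Rightarrow> 's) \<Rightarrow> ('s \<Rightarrow> bool) \<Rightarrow> 's \<Rightarrow> ('i, 'a) lbl list set \<Rightarrow> ennreal" where
  "viol_mass I phi_f s W = (\<Sum>\<^sub>\<infinity> w \<in> W. (if \<not> phi_f (sem I w s) then wt w else 0))"

definition PPhi :: "('a \<Rightarrow> 's \<Rightarrow> 's) \<Rightarrow> ('s \<Rightarrow> bool) \<Rightarrow> ('s \<Rightarrow> bool) \<Rightarrow> ('q, ('i, 'a) lbl) pcfa \<Rightarrow> ennreal" where
  "PPhi I phi_e phi_f A =
     (SUP s \<in> {s. phi_e s}. SUP S \<in> {S. is_fmstrat A S}. viol_mass I phi_f s (induced_lang A S))"

definition mergeable :: "('i, 'a) lbl set \<Rightarrow> ('i, 'a) lbl list set \<Rightarrow> bool" where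
  "mergeable Sig Th \<longleftrightarrow> (\<exists>M :: (nat, ('i, 'a) lbl) pcfa. cfmc Sig M \<and> Th = lang M)"

definition Mergeable :: "('i, 'a) lbl set \<Rightarrow> ('i, 'a) lbl list set \<Rightarrow> ('i, 'a) lbl list set set" where
  "Mergeable Sig Th = {Pi. Pi \<subseteq> Th \<and> mergeable Sig Pi}"

definition PL :: "('i, 'a) lbl set \<Rightarrow> ('a \<Rightarrow> 's \<Rightarrow> 's) \<Rightarrow> ('s \<Rightarrow> bool) \<Rightarrow> ('s \<Rightarrow> bool) \<Rightarrow> ('i, 'a) lbl list set \<Rightarrow> ennreal" where
  "PL Sig I phi_e phi_f Th =
     (SUP s \<in> {s. phi_e s}. SUP Pi \<in> Mergeable Sig Th. viol_mass I phi_f s Pi)"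

end

theory Submission
  imports Defs
begin

text \<open>Take Q empty and A a copy of P with locations renamed into the naturals; then (i) and (ii)
  are immediate. For (iii), a mergeable \<open>W = lang M \<subseteq> lang P\<close> with M a CFMC is contained in the
  language of the CFMC induced on P by the finite-memory strategy that runs M alongside P as its
  memory and always picks the unique action enabled in M. Hence every term in the supremum
  defining \<open>PL (lang P)\<close> is bounded by one in the supremum defining \<open>PPhi P\<close>.\<close>

lemma viol_mass_mono:
  assumes "W \<subseteq> V"
  shows "viol_mass I phi_f s W \<le> viol_mass I phi_f s V"
  unfolding viol_mass_def
proof (rule infsum_mono_neutral)
  show "(\<lambda>w. if \<not> phi_f (sem I w s) then wt w else 0) summable_on W"
       "(\<lambda>w. if \<not> phi_f (sem I w s) then wt w else 0) summable_on V"
    by (rule nonneg_summable_on_complete, simp)+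
qed (use assms in auto)

definition rename_pcfa :: "('q \<Rightarrow> 'r) \<Rightarrow> ('q, 'l) pcfa \<Rightarrow> ('r, 'l) pcfa" where
  "rename_pcfa f A = \<lparr>p_locs = f ` p_locs A,
     p_trans = {(f q, s, f p) | q s p. (q, s, p) \<in> p_trans A},
     p_init = f (p_init A), p_final = f (p_final A)\<rparr>"

lemma is_pcfa_rename_pcfa: "is_pcfa Sig A \<Longrightarrow> is_pcfa Sig (rename_pcfa f A)"
  unfolding is_pcfa_def rename_pcfa_def by auto

lemma reach_rename_pcfa:
  assumes inj: "inj_on f (p_locs A)" and A: "is_pcfa Sig A"
    and "q \<in> p_locs A" "q' \<in> p_locs A"
  shows "reach (rename_pcfa f A) (f q) w (f q') \<longleftrightarrow> reach A q w q'"
  using assms(3)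
proof (induction w arbitrary: q)
  case Nil
  then show ?case using inj assms(4) by (auto dest: inj_onD)
next
  case (Cons s w)
  have tr: "p_trans A \<subseteq> p_locs A \<times> Sig \<times> p_locs A" using A unfolding is_pcfa_def by blast
  show ?case
  proof
    assume "reach (rename_pcfa f A) (f q) (s # w) (f q')"
    then obtain q0 p where "(q0, s, p) \<in> p_trans A" "f q0 = f q"
      "reach (rename_pcfa f A) (f p) w (f q')"
      by (auto simp: rename_pcfa_def)
    moreover from this tr have "q0 \<in> p_locs A" "p \<in> p_locs A" by auto
    ultimately show "reach A q (s # w) q'"
      using Cons inj by (auto dest: inj_onD)
  next
    assume "reach A q (s # w) q'"
    then obtain p where "(q, s, p) \<in> p_trans A" "reach A p w q'" by auto
    moreover from this tr have "p \<in> p_locs A" by auto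
    ultimately show "reach (rename_pcfa f A) (f q) (s # w) (f q')"
      using Cons by (auto simp: rename_pcfa_def)
  qed
qed

lemma lang_rename_pcfa:
  assumes "inj_on f (p_locs A)" "is_pcfa Sig A"
  shows "lang (rename_pcfa f A) = lang A"
  using reach_rename_pcfa[OF assms] assms(2)
  unfolding lang_def is_pcfa_def by (simp add: rename_pcfa_def)

lemma is_pcfa_nat_copy:
  assumes "is_pcfa Sig A"
  obtains A' :: "(nat, 'l) pcfa" where "is_pcfa Sig A'" "lang A' = lang A"
proof
  have "inj_on (to_nat_on (p_locs A)) (p_locs A)"
    using assms unfolding is_pcfa_def by (auto intro: inj_on_to_nat_on countable_finite)
  then show "lang (rename_pcfa (to_nat_on (p_locs A)) A) = lang A"
    using lang_rename_pcfa assms by blast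
qed (rule is_pcfa_rename_pcfa[OF assms])

lemma is_pcfa_empty_lang: "\<exists>Q :: (nat, 'l) pcfa. is_pcfa Sig Q \<and> lang Q = {}"
proof -
  define Q :: "(nat, 'l) pcfa" where "Q = \<lparr>p_locs = {0, 1}, p_trans = {}, p_init = 0, p_final = 1\<rparr>"
  have "reach Q 0 w 1 \<longleftrightarrow> False" for w
    by (cases w) (auto simp: Q_def)
  then show ?thesis
    by (intro exI[of _ Q]) (auto simp: Q_def is_pcfa_def lang_def)
qed

definition cfmc_strategy :: "(nat, ('i, 'a) lbl) pcfa \<Rightarrow> ('q, 'i, 'a) fmstrat" where
  "cfmc_strategy M = \<lparr>s_mem = p_locs M, s_m0 = p_init M,
     s_upd = (\<lambda>m q s. if \<exists>p. (m, s, p) \<in> p_trans M then SOME p. (m, s, p) \<in> p_trans M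
                       else p_init M),
     s_ch = (\<lambda>q m. action (SOME t. \<exists>p. (m, t, p) \<in> p_trans M))\<rparr>"

lemma is_fmstrat_cfmc_strategy:
  assumes "is_pcfa Sig M"
  shows "is_fmstrat A (cfmc_strategy M)"
proof -
  have "(m, s, SOME p. (m, s, p) \<in> p_trans M) \<in> p_trans M" if "\<exists>p. (m, s, p) \<in> p_trans M" for m s
    using someI_ex[OF that] .
  then show ?thesis
    using assms unfolding is_fmstrat_def is_pcfa_def cfmc_strategy_def by auto
qed

lemma s_ch_cfmc_strategy:
  assumes "cfmc Sig M" "(m, t, p) \<in> p_trans M"
  shows "s_ch (cfmc_strategy M) q m = action t"
proof -
  obtain p' where "(m, SOME t. \<exists>p. (m, t, p) \<in> p_trans M, p') \<in> p_trans M"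
    using someI_ex[of "\<lambda>t. \<exists>p. (m, t, p) \<in> p_trans M"] assms(2) by blast
  with assms have "action (SOME t. \<exists>p. (m, t, p) \<in> p_trans M) = action t"
    unfolding cfmc_def by blast
  then show ?thesis by (simp add: cfmc_strategy_def)
qed

lemma s_upd_cfmc_strategy:
  assumes "cfmc Sig M" "(m, s, p) \<in> p_trans M"
  shows "s_upd (cfmc_strategy M) m q s = p"
proof -
  have "deterministic M" using assms(1) unfolding cfmc_def cfmdp_def by blast
  moreover have "(m, s, SOME p. (m, s, p) \<in> p_trans M) \<in> p_trans M"
    using someI_ex assms(2) by metis
  ultimately have "(SOME p. (m, s, p) \<in> p_trans M) = p"
    using assms(2) unfolding deterministic_def by blast
  then show ?thesis using assms(2) by (auto simp: cfmc_strategy_def)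
qed

lemma ind_reach_cfmc_strategy:
  assumes M: "cfmc Sig M"
  shows "reach M m w (p_final M) \<Longrightarrow> reach A q w (p_final A)
    \<Longrightarrow> ind_reach A (cfmc_strategy M) q m w"
proof (induction w arbitrary: q m)
  case Nil
  then show ?case by simp
next
  case (Cons s w)
  obtain m' where m': "(m, s, m') \<in> p_trans M" "reach M m' w (p_final M)"
    using Cons.prems by auto
  obtain p where p: "(q, s, p) \<in> p_trans A" "reach A p w (p_final A)"
    using Cons.prems by auto
  show ?case
    using p(1) Cons.IH[OF m'(2) p(2)]
      s_ch_cfmc_strategy[OF M m'(1), of q] s_upd_cfmc_strategy[OF M m'(1), of q]
    by auto
qed

lemma lang_subset_induced_lang_cfmc_strategy:
  assumes "cfmc Sig M" "lang M \<subseteq> lang A"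
  shows "lang M \<subseteq> induced_lang A (cfmc_strategy M)"
proof
  fix w assume "w \<in> lang M"
  with assms(2) have "reach M (p_init M) w (p_final M)" "reach A (p_init A) w (p_final A)"
    unfolding lang_def by auto
  then have "ind_reach A (cfmc_strategy M) (p_init A) (p_init M) w"
    by (rule ind_reach_cfmc_strategy[OF assms(1)])
  then show "w \<in> induced_lang A (cfmc_strategy M)"
    unfolding induced_lang_def by (simp add: cfmc_strategy_def)
qed

lemma PL_lang_le_PPhi:
  fixes A :: "('q, ('i, 'a) lbl) pcfa"
  shows "PL Sig I phi_e phi_f (lang A) \<le> PPhi I phi_e phi_f A"
  unfolding PL_def
proof (intro SUP_least)
  fix s W assume s: "s \<in> {s. phi_e s}" and "W \<in> Mergeable Sig (lang A)"
  then obtain M :: "(nat, ('i, 'a) lbl) pcfa" where M: "cfmc Sig M" "W = lang M" "lang M \<subseteq> lang A"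
    unfolding Mergeable_def mergeable_def by auto
  have "is_pcfa Sig M" using M(1) unfolding cfmc_def cfmdp_def by blast
  then have strat: "cfmc_strategy M \<in> {S. is_fmstrat A S}"
    using is_fmstrat_cfmc_strategy by blast
  have "viol_mass I phi_f s W \<le> viol_mass I phi_f s (induced_lang A (cfmc_strategy M))"
    unfolding M(2) by (rule viol_mass_mono[OF lang_subset_induced_lang_cfmc_strategy[OF M(1,3)]])
  also have "\<dots> \<le> PPhi I phi_e phi_f A"
    unfolding PPhi_def by (rule SUP_upper2[OF s], rule SUP_upper[OF strat])
  finally show "viol_mass I phi_f s W \<le> PPhi I phi_e phi_f A" .
qed

theorem mainTheorem6:
  fixes Sig :: "('i, 'a) lbl set"
    and P :: "('q, ('i, 'a) lbl) pcfa"
    and I :: "'a \<Rightarrow> 's \<Rightarrow> 's"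
    and phi_e phi_f :: "'s \<Rightarrow> bool"
    and \<beta> :: real
  assumes "finite Sig"
    and "\<forall>i. Pb i Lft \<in> Sig \<longleftrightarrow> Pb i Rgt \<in> Sig"
    and "cfmdp Sig P" and "normalised P"
    and "0 \<le> \<beta>" and "\<beta> \<le> 1"
    and "PPhi I phi_e phi_f P \<le> ennreal \<beta>"
  shows "\<exists>(Q :: (nat, ('i, 'a) lbl) pcfa) (A :: (nat, ('i, 'a) lbl) pcfa).
           is_pcfa Sig Q \<and> is_pcfa Sig A
         \<and> lang P \<subseteq> lang Q \<union> lang A
         \<and> (\<forall>\<tau> \<in> lang Q. \<forall>s. phi_e s \<longrightarrow> \<not> \<not> phi_f (sem I \<tau> s))
         \<and> PL Sig I phi_e phi_f (lang A) \<le> ennreal \<beta>"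
proof -
  obtain Q :: "(nat, ('i, 'a) lbl) pcfa" where Q: "is_pcfa Sig Q" "lang Q = {}"
    using is_pcfa_empty_lang by blast
  have "is_pcfa Sig P" using assms(3) unfolding cfmdp_def by blast
  then obtain A :: "(nat, ('i, 'a) lbl) pcfa" where A: "is_pcfa Sig A" "lang A = lang P"
    by (rule is_pcfa_nat_copy)
  have "PL Sig I phi_e phi_f (lang A) \<le> ennreal \<beta>"
    using PL_lang_le_PPhi[of Sig I phi_e phi_f P] assms(7) A(2) by simp
  with Q A show ?thesis by blast
qed

end
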